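(* Let $(\|\cdot\|_n)_{n\in\mathbb N}$ be a sequence of norms on $\mathbb R^d$ and $(A_n)_{n\in\mathbb N}$ a sequence of invertible linear operators on $\mathbb R^d$ such that there exist $K,a>0$ with $\|\mathcal A(m,n)x\|_m\le K(m/n)^a\|x\|_n$ and $\|\mathcal A(n,m)x\|_n\le K(m/n)^a\|x\|_m$ for all $m\ge n$ in $\mathbb N$ and $x\in\mathbb R^d$. Set $B_n=\mathcal A(2^{n+1},2^n)$ for $n\ge0$. The following are equivalent: (a) $(A_n)_{n\in\mathbb N}$ admits a strong polynomial dichotomy with respect to $(\|\cdot\|_n)_{n\in\mathbb N}$; (b) $(B_n)_{n\in\mathbb Z^+}$ admits a strong exponential dichotomy with respect to $(\|\cdot\|_{2^n})_{n\in\mathbb Z^+}$.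
   Context: $\mathbb N=\{1,2,\dots\}$, $\mathbb Z^+=\{0,1,2,\dots\}$. For a sequence $(C_n)$ of invertible operators, $\mathcal C(m,n)=C_{m-1}\cdots C_n$ ($m>n$), $\mathrm{Id}$ ($m=n$), $C_m^{-1}\cdots C_{n-1}^{-1}$ ($m<n$); $\mathcal A$ is this for $(A_n)$. Strong polynomial dichotomy w.r.t. norms $(\|\cdot\|_n)_{n\in\mathbb N}$: there exist $K>0$, $a\ge\lambda>0$ and projections $P_n$ with $A_nP_n=P_{n+1}A_n$ such that for $m\ge n$, $x$, $Q_m=\mathrm{Id}-P_m$: $\|\mathcal A(m,n)P_nx\|_m\le K(m/n)^{-\lambda}\|x\|_n$, $\|\mathcal A(n,m)Q_mx\|_n\le K(m/n)^{-\lambda}\|x\|_m$, $\|\mathcal A(m,n)x\|_m\le K(m/n)^a\|x\|_n$, $\|\mathcal A(n,m)x\|_n\le K(m/n)^a\|x\|_m$. Strong exponential dichotomy w.r.t. norms $(|\cdot|_n)_{n\in\mathbb Z^+}$ for $(B_n)_{n\in\mathbb Z^+}$: there exist $K>0$, $a\ge\lambda>0$, projections $\tilde P_n$ with $B_n\tilde P_n=\tilde P_{n+1}B_n$ such that for $m\ge n$, $x$, $\tilde Q_m=\mathrm{Id}-\tilde P_m$: $|\mathcal B(m,n)\tilde P_nx|_m\le Ke^{-\lambda(m-n)}|x|_n$, $|\mathcal B(n,m)\tilde Q_mx|_n\le Ke^{-\lambda(m-n)}|x|_m$, $|\mathcal B(m,n)x|_m\le Ke^{a(m-n)}|x|_n$,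 $|\mathcal B(n,m)x|_n\le Ke^{a(m-n)}|x|_m$. *)

theory Defs
  imports "HOL-Analysis.Analysis"
begin

definition is_norm :: "('a::real_vector \<Rightarrow> real) \<Rightarrow> bool" where
  "is_norm N \<longleftrightarrow> (\<forall>x. 0 \<le> N x) \<and> (\<forall>x. N x = 0 \<longleftrightarrow> x = 0)
     \<and> (\<forall>c x. N (c *\<^sub>R x) = \<bar>c\<bar> * N x) \<and> (\<forall>x y. N (x + y) \<le> N x + N y)"

fun fprod :: "(nat \<Rightarrow> 'a \<Rightarrow> 'a) \<Rightarrow> nat \<Rightarrow> nat \<Rightarrow> 'a \<Rightarrow> 'a" where
  "fprod C n 0 = id"
| "fprod C n (Suc k) = C (n + k) \<circ> fprod C n k"

fun bprod :: "(nat \<Rightarrow> 'a \<Rightarrow> 'a) \<Rightarrow> nat \<Rightarrow> nat \<Rightarrow> 'a \<Rightarrow> 'a" where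
  "bprod C m 0 = id"
| "bprod C m (Suc k) = bprod C m k \<circ> inv (C (m + k))"

text \<open>The evolution family: C(m,n) = C_{m-1}...C_n for m > n, Id for m = n,
  C_m^{-1} ... C_{n-1}^{-1} for m < n.\<close>
definition evol :: "(nat \<Rightarrow> 'a \<Rightarrow> 'a) \<Rightarrow> nat \<Rightarrow> nat \<Rightarrow> 'a \<Rightarrow> 'a" where
  "evol C m n = (if n \<le> m then fprod C n (m - n) else bprod C m (n - m))"

definition is_projection :: "('a::real_vector \<Rightarrow> 'a) \<Rightarrow> bool" where
  "is_projection P \<longleftrightarrow> linear P \<and> (\<forall>x. P (P x) = P x)"

definition strong_poly_dich ::
  "(nat \<Rightarrow> 'a::real_vector \<Rightarrow> 'a) \<Rightarrow> (nat \<Rightarrow> 'a \<Rightarrow> real) \<Rightarrow> bool" where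
  "strong_poly_dich A N \<longleftrightarrow>
    (\<exists>K a lam P. K > 0 \<and> a \<ge> lam \<and> lam > 0 \<and>
      (\<forall>n\<ge>1. is_projection (P n)) \<and>
      (\<forall>n\<ge>1. A n \<circ> P n = P (Suc n) \<circ> A n) \<and>
      (\<forall>m n x. 1 \<le> n \<and> n \<le> m \<longrightarrow>
         N m (evol A m n (P n x)) \<le> K * (real m / real n) powr (-lam) * N n x \<and>
         N n (evol A n m (x - P m x)) \<le> K * (real m / real n) powr (-lam) * N m x \<and>
         N m (evol A m n x) \<le> K * (real m / real n) powr a * N n x \<and>
         N n (evol A n m x) \<le> K * (real m / real n) powr a * N m x))"

definition strong_exp_dich ::
  "(nat \<Rightarrow> 'a::real_vector \<Rightarrow> 'a) \<Rightarrow> (nat \<Rightarrow> 'a \<Rightarrow> real) \<Rightarrow> bool" where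
  "strong_exp_dich B N \<longleftrightarrow>
    (\<exists>K a lam P. K > 0 \<and> a \<ge> lam \<and> lam > 0 \<and>
      (\<forall>n. is_projection (P n)) \<and>
      (\<forall>n. B n \<circ> P n = P (Suc n) \<circ> B n) \<and>
      (\<forall>m n x. n \<le> m \<longrightarrow>
         N m (evol B m n (P n x)) \<le> K * exp (-lam * (real m - real n)) * N n x \<and>
         N n (evol B n m (x - P m x)) \<le> K * exp (-lam * (real m - real n)) * N m x \<and>
         N m (evol B m n x) \<le> K * exp (a * (real m - real n)) * N n x \<and>
         N n (evol B n m x) \<le> K * exp (a * (real m - real n)) * N m x))"

end

theory Submission
  imports Defs "HOL-Library.Discrete_Functions"
begin

text \<open>Write E(m,n) for the evolution family of (A_n). Sampling at the dyadic times 2^n turns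
  polynomial rates into exponential ones, because (2^m / 2^n) powr c = exp (c ln 2 (m - n)); this
  gives (a) \<Longrightarrow> (b) with the projections P_(2^n).

  Conversely, let Q_n be the projections of the sampled dichotomy and transport Q_0 along the
  evolution, P_k = E(k,1) Q_0 E(1,k); invariance of (Q_n) gives P_(2^j) = Q_j. For 1 \<le> n \<le> m
  choose i, j with 2^i \<le> n < 2^(i+1) and 2^j \<le> m < 2^(j+1) and factor
  E(m,n) P_n = E(m,2^j) E(2^j,2^i) Q_i E(2^i,n). The outer factors span less than one doubling of
  time, so the polynomial growth hypothesis bounds them by K 2^a, while the middle factor decays
  like exp (-\<mu> (j - i)) \<le> 2 powr (\<mu>/ln 2) (m/n) powr (-\<mu>/ln 2). The unstable part is the
  time-reversed argument.\<close>

section \<open>Evolution families\<close>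

lemma evol_self [simp]: "evol C n n = id"
  by (simp add: evol_def)

lemma evol_Suc_self: "evol C (Suc n) n = C n"
  by (simp add: evol_def)

lemma fprod_eq_comp_inv:
  assumes C: "\<And>k. b \<le> k \<Longrightarrow> C k = \<Phi> (Suc k) \<circ> inv (\<Phi> k)"
    and bij: "\<And>k. b \<le> k \<Longrightarrow> bij (\<Phi> k)" and "b \<le> n"
  shows "fprod C n k = \<Phi> (n + k) \<circ> inv (\<Phi> n)"
proof (induction k)
  case 0
  show ?case using bij[OF \<open>b \<le> n\<close>] by (auto simp: fun_eq_iff bij_is_surj surj_f_inv_f)
next
  case (Suc k)
  show ?case
    using Suc C[of "n + k"] bij[of "n + k"] \<open>b \<le> n\<close> by (auto simp: fun_eq_iff bij_is_inj inv_f_f)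
qed

lemma bprod_eq_comp_inv:
  assumes C: "\<And>k. b \<le> k \<Longrightarrow> C k = \<Phi> (Suc k) \<circ> inv (\<Phi> k)"
    and bij: "\<And>k. b \<le> k \<Longrightarrow> bij (\<Phi> k)" and "b \<le> m"
  shows "bprod C m k = \<Phi> m \<circ> inv (\<Phi> (m + k))"
proof (induction k)
  case 0
  show ?case using bij[OF \<open>b \<le> m\<close>] by (auto simp: fun_eq_iff bij_is_surj surj_f_inv_f)
next
  case (Suc k)
  have bij_k: "bij (\<Phi> (Suc (m + k)))" "bij (\<Phi> (m + k))"
    using bij \<open>b \<le> m\<close> by auto
  then have "inv (C (m + k)) = \<Phi> (m + k) \<circ> inv (\<Phi> (Suc (m + k)))"
    using C[of "m + k"] \<open>b \<le> m\<close> by (simp add: o_inv_distrib bij_imp_bij_inv inv_inv_eq)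
  then show ?case
    using Suc bij_k by (auto simp: fun_eq_iff bij_is_inj inv_f_f)
qed

lemma evol_eq_comp_inv:
  assumes "\<And>k. b \<le> k \<Longrightarrow> C k = \<Phi> (Suc k) \<circ> inv (\<Phi> k)"
    and "\<And>k. b \<le> k \<Longrightarrow> bij (\<Phi> k)" and "b \<le> m" "b \<le> n"
  shows "evol C m n = \<Phi> m \<circ> inv (\<Phi> n)"
  using fprod_eq_comp_inv[of b C \<Phi> n "m - n", OF assms(1,2,4)]
    bprod_eq_comp_inv[of b C \<Phi> m "n - m", OF assms(1,2,3)]
  by (cases "n \<le> m") (simp_all add: evol_def)

lemma fprod_bij:
  assumes "\<And>k. b \<le> k \<Longrightarrow> bij (C k)" and "b \<le> n"
  shows "bij (fprod C n k)"
proof (induction k)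
  case (Suc k)
  show ?case unfolding fprod.simps by (rule bij_comp[OF Suc]) (use assms in simp)
qed (simp only: fprod.simps bij_id)

lemma fprod_linear:
  assumes "\<And>k. b \<le> k \<Longrightarrow> linear (C k)" and "b \<le> n"
  shows "linear (fprod C n k)"
proof (induction k)
  case (Suc k)
  show ?case unfolding fprod.simps by (rule linear_compose[OF Suc]) (use assms in simp)
qed (simp only: fprod.simps linear_id)

lemma evol_eq_fprod_comp_inv:
  assumes bij: "\<And>k. b \<le> k \<Longrightarrow> bij (C k)" and "b \<le> m" "b \<le> n"
  shows "evol C m n = fprod C b (m - b) \<circ> inv (fprod C b (n - b))"
proof (rule evol_eq_comp_inv[where b = b])
  fix k assume "b \<le> k"
  then have "fprod C b (Suc k - b) = C k \<circ> fprod C b (k - b)"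
    by (simp add: Suc_diff_le)
  then show "C k = fprod C b (Suc k - b) \<circ> inv (fprod C b (k - b))"
    using fprod_bij[of b C b "k - b", OF bij] by (auto simp: fun_eq_iff bij_is_surj surj_f_inv_f)
qed (use fprod_bij[of b C b] bij assms in auto)

lemma evol_cocycle:
  assumes "\<And>k. b \<le> k \<Longrightarrow> bij (C k)" and "b \<le> m" "b \<le> l" "b \<le> n"
  shows "evol C m l (evol C l n x) = evol C m n x"
  using assms fprod_bij[of b C b "l - b"]
  by (simp add: evol_eq_fprod_comp_inv[of b C] bij_is_inj inv_f_f)

lemma evol_bij:
  assumes "\<And>k. b \<le> k \<Longrightarrow> bij (C k)" and "b \<le> m" "b \<le> n"
  shows "bij (evol C m n)"
  using assms fprod_bij[of b C b]
  by (simp add: evol_eq_fprod_comp_inv[of b C m n] bij_comp bij_imp_bij_inv)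

lemma bij_linear_imp_inv_linear:
  fixes f :: "'a::real_vector \<Rightarrow> 'b::real_vector"
  assumes "bij f" "linear f"
  shows "linear (inv f)"
proof (rule linearI)
  have inv_eq: "inv f (f x) = x" "f (inv f y) = y" for x y
    using assms(1) by (simp_all add: bij_is_inj bij_is_surj surj_f_inv_f)
  show "inv f (x + y) = inv f x + inv f y" for x y
    by (metis inv_eq linear_add[OF assms(2)])
  show "inv f (c *\<^sub>R x) = c *\<^sub>R inv f x" for c x
    by (metis inv_eq linear_scale[OF assms(2)])
qed

lemma evol_linear:
  assumes bij: "\<And>k. b \<le> k \<Longrightarrow> bij (C k)" and lin: "\<And>k. b \<le> k \<Longrightarrow> linear (C k)"
    and "b \<le> m" "b \<le> n"
  shows "linear (evol C m n)"
proof -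
  have "bij (fprod C b j)" "linear (fprod C b j)" for j
    using fprod_bij[of b C b j] fprod_linear[of b C b j] bij lin by auto
  then show ?thesis
    using evol_eq_fprod_comp_inv[of b C m n] assms
    by (auto intro!: linear_compose bij_linear_imp_inv_linear)
qed

lemma evol_sample:
  assumes bij: "\<And>k. b \<le> k \<Longrightarrow> bij (C k)" and g: "\<And>k. b \<le> g k"
  shows "evol (\<lambda>k. evol C (g (Suc k)) (g k)) m n = evol C (g m) (g n)"
proof -
  let ?\<Phi> = "\<lambda>k. fprod C b (g k - b)"
  have "evol (\<lambda>k. evol C (g (Suc k)) (g k)) m n = ?\<Phi> m \<circ> inv (?\<Phi> n)"
  proof (rule evol_eq_comp_inv[of 0])
    show "bij (?\<Phi> k)" for k using fprod_bij[of b C b] bij by blast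
    show "evol C (g (Suc k)) (g k) = ?\<Phi> (Suc k) \<circ> inv (?\<Phi> k)" for k
      using evol_eq_fprod_comp_inv[of b C "g (Suc k)" "g k"] bij g by blast
  qed simp_all
  then show ?thesis
    using evol_eq_fprod_comp_inv[of b C "g m" "g n"] bij g by simp
qed

section \<open>Invariant projections\<close>

lemma fprod_invariant_proj:
  assumes "\<And>k. b \<le> k \<Longrightarrow> C k \<circ> P k = P (Suc k) \<circ> C k" and "b \<le> n"
  shows "fprod C n k (P n x) = P (n + k) (fprod C n k x)"
proof (induction k)
  case (Suc k)
  then show ?case using assms by (auto simp: fun_eq_iff)
qed simp

lemma evol_invariant_proj:
  assumes "\<And>k. b \<le> k \<Longrightarrow> C k \<circ> P k = P (Suc k) \<circ> C k" and "b \<le> n" "n \<le> m"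
  shows "evol C m n (P n x) = P m (evol C m n x)"
  using fprod_invariant_proj[of b C P n "m - n"] assms \<open>n \<le> m\<close> by (simp add: evol_def)

lemma invariant_proj_conj:
  assumes bij: "\<And>k. b \<le> k \<Longrightarrow> bij (C k)"
    and P_inv: "\<And>k. b \<le> k \<Longrightarrow> C k \<circ> P k = P (Suc k) \<circ> C k" and "b \<le> m" "b \<le> n"
  shows "P m x = evol C m n (P n (evol C n m x))"
proof (cases "n \<le> m")
  case True
  then show ?thesis
    using evol_invariant_proj[of b C P n m] P_inv \<open>b \<le> n\<close> True
      evol_cocycle[of b C m n m x] bij \<open>b \<le> m\<close>
    by simp
next
  case False
  then show ?thesis
    using evol_invariant_proj[of b C P m n] P_inv \<open>b \<le> m\<close>
      evol_cocycle[of b C m n m "P m x"] bij \<open>b \<le> n\<close>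
    by simp
qed

definition transport_proj :: "(nat \<Rightarrow> 'a \<Rightarrow> 'a) \<Rightarrow> nat \<Rightarrow> ('a \<Rightarrow> 'a) \<Rightarrow> nat \<Rightarrow> 'a \<Rightarrow> 'a"
  where "transport_proj C b Q k = evol C k b \<circ> Q \<circ> evol C b k"

lemma is_projection_transport_proj:
  assumes "\<And>k. b \<le> k \<Longrightarrow> bij (C k)" and "\<And>k. b \<le> k \<Longrightarrow> linear (C k)"
    and "is_projection Q" "b \<le> k"
  shows "is_projection (transport_proj C b Q k)"
  unfolding is_projection_def
proof
  show "linear (transport_proj C b Q k)"
    unfolding transport_proj_def using assms evol_linear[of b C] \<open>is_projection Q\<close>
    by (auto simp: is_projection_def intro!: linear_compose)
  show "\<forall>x. transport_proj C b Q k (transport_proj C b Q k x) = transport_proj C b Q k x"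
    using assms evol_cocycle[of b C b k b] by (simp add: transport_proj_def is_projection_def)
qed

lemma transport_proj_invariant:
  assumes "\<And>k. b \<le> k \<Longrightarrow> bij (C k)" and "b \<le> k"
  shows "C k \<circ> transport_proj C b Q k = transport_proj C b Q (Suc k) \<circ> C k"
  using assms evol_cocycle[of b C "Suc k" k b] evol_cocycle[of b C b "Suc k" k]
  by (auto simp: fun_eq_iff transport_proj_def evol_Suc_self)

lemma transport_proj_sample:
  assumes bij: "\<And>k. b \<le> k \<Longrightarrow> bij (C k)" and g: "\<And>k. b \<le> g k"
    and Q_inv: "\<And>k. evol C (g (Suc k)) (g k) \<circ> Q k = Q (Suc k) \<circ> evol C (g (Suc k)) (g k)"
  shows "transport_proj C (g 0) (Q 0) (g j) = Q j"
proof
  fix x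
  let ?B = "\<lambda>k. evol C (g (Suc k)) (g k)"
  have "Q j x = evol ?B j 0 (Q 0 (evol ?B 0 j x))"
    by (rule invariant_proj_conj[of 0 ?B Q j 0]) (use evol_bij[of b C] bij g Q_inv in auto)
  then show "transport_proj C (g 0) (Q 0) (g j) x = Q j x"
    by (simp add: transport_proj_def evol_sample[of b C g, OF bij g])
qed

section \<open>Polynomial and dyadic exponential dichotomies\<close>

lemma strong_poly_dichI:
  fixes K\<^sub>s K\<^sub>g lam a :: real
  assumes "\<And>n. 1 \<le> n \<Longrightarrow> is_projection (P n)"
    and "\<And>n. 1 \<le> n \<Longrightarrow> A n \<circ> P n = P (Suc n) \<circ> A n"
    and pos: "0 \<le> K\<^sub>s" "0 < K\<^sub>g" "0 < lam"
    and nonneg: "\<And>n x. 1 \<le> n \<Longrightarrow> 0 \<le> N n x"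
    and stable: "\<And>m n x. 1 \<le> n \<Longrightarrow> n \<le> m \<Longrightarrow>
       N m (evol A m n (P n x)) \<le> K\<^sub>s * (real m / real n) powr (-lam) * N n x"
    and unstable: "\<And>m n x. 1 \<le> n \<Longrightarrow> n \<le> m \<Longrightarrow>
       N n (evol A n m (x - P m x)) \<le> K\<^sub>s * (real m / real n) powr (-lam) * N m x"
    and growth_fwd: "\<And>m n x. 1 \<le> n \<Longrightarrow> n \<le> m \<Longrightarrow>
       N m (evol A m n x) \<le> K\<^sub>g * (real m / real n) powr a * N n x"
    and growth_bwd: "\<And>m n x. 1 \<le> n \<Longrightarrow> n \<le> m \<Longrightarrow>
       N n (evol A n m x) \<le> K\<^sub>g * (real m / real n) powr a * N m x"
  shows "strong_poly_dich A N"
  unfolding strong_poly_dich_def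
proof (intro exI conjI allI impI)
  fix m n :: nat and x assume nm: "1 \<le> n \<and> n \<le> m"
  have decay: "K\<^sub>s * (real m / real n) powr (-lam) * z \<le> max K\<^sub>s K\<^sub>g * (real m / real n) powr (-lam) * z"
    if "0 \<le> z" for z
    using that by (intro mult_right_mono) auto
  have "(real m / real n) powr a \<le> (real m / real n) powr max a lam"
    using nm by (intro powr_mono) auto
  then have growth: "K\<^sub>g * (real m / real n) powr a * z \<le> max K\<^sub>s K\<^sub>g * (real m / real n) powr max a lam * z"
    if "0 \<le> z" for z
    using that pos by (intro mult_right_mono mult_mono) auto
  show "N m (evol A m n (P n x)) \<le> max K\<^sub>s K\<^sub>g * (real m / real n) powr (-lam) * N n x"
    using stable[of n m x] decay[of "N n x"] nonneg[of n x] nm by linarith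
  show "N n (evol A n m (x - P m x)) \<le> max K\<^sub>s K\<^sub>g * (real m / real n) powr (-lam) * N m x"
    using unstable[of n m x] decay[of "N m x"] nonneg[of m x] nm by linarith
  show "N m (evol A m n x) \<le> max K\<^sub>s K\<^sub>g * (real m / real n) powr max a lam * N n x"
    using growth_fwd[of n m x] growth[of "N n x"] nonneg[of n x] nm by linarith
  show "N n (evol A n m x) \<le> max K\<^sub>s K\<^sub>g * (real m / real n) powr max a lam * N m x"
    using growth_bwd[of n m x] growth[of "N m x"] nonneg[of m x] nm by linarith
qed (use assms in auto)

lemma pow2_ratio_powr: "(real (2 ^ m) / real (2 ^ n)) powr c = exp (c * ln 2 * (real m - real n))"
proof -
  have "real (2 ^ m) / real (2 ^ n) = 2 powr (real m - real n)"
    by (simp add: powr_diff powr_realpow)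
  then show ?thesis
    by (simp add: powr_powr powr_def mult_ac)
qed

lemma exp_floor_log_diff_le_powr:
  fixes \<mu> :: real and n m :: nat
  assumes "0 < \<mu>" "1 \<le> n" "n \<le> m"
  shows "exp (-\<mu> * (real (floor_log m) - real (floor_log n)))
    \<le> 2 powr (\<mu> / ln 2) * (real m / real n) powr (-(\<mu> / ln 2))"
proof -
  define i j where "i = floor_log n" and "j = floor_log m"
  have "2 ^ i \<le> n" "m < 2 * 2 ^ j"
    using assms floor_log_exp2_le[of n] floor_log_exp2_gt[of m] by (simp_all add: i_def j_def)
  let ?l = "\<mu> / ln 2"
  have n_pos: "0 < real n"
    using \<open>1 \<le> n\<close> by simp
  have "real m / real n \<le> real (2 ^ (j + 1)) / real (2 ^ i)"
  proof (rule frac_le)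
    show "real m \<le> real (2 ^ (j + 1))" using \<open>m < 2 * 2 ^ j\<close> by (simp only: of_nat_le_iff) simp
    show "real (2 ^ i) \<le> real n" using \<open>2 ^ i \<le> n\<close> by (simp only: of_nat_le_iff)
  qed simp_all
  then have "(real (2 ^ (j + 1)) / real (2 ^ i)) powr (-?l) \<le> (real m / real n) powr (-?l)"
    using \<open>0 < \<mu>\<close> n_pos \<open>n \<le> m\<close> by (intro powr_mono2') (auto simp: ln_gt_zero)
  moreover have "exp (-\<mu> * (real j - real i)) = 2 powr ?l * (real (2 ^ (j + 1)) / real (2 ^ i)) powr (-?l)"
    by (subst pow2_ratio_powr) (simp add: powr_def exp_add[symmetric] algebra_simps)
  ultimately show ?thesis
    unfolding i_def j_def by (simp add: mult_left_mono)
qed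

lemma strong_exp_dich_sample:
  assumes bij: "\<And>n. 1 \<le> n \<Longrightarrow> bij (A n)" and "strong_poly_dich A N"
  shows "strong_exp_dich (\<lambda>n. evol A (2 ^ (n + 1)) (2 ^ n)) (\<lambda>n. N (2 ^ n))"
proof -
  obtain K a lam P where K: "0 < K" and a: "lam \<le> a" and lam: "0 < lam"
    and proj: "\<forall>n\<ge>1. is_projection (P n)"
    and P_inv: "\<forall>n\<ge>1. A n \<circ> P n = P (Suc n) \<circ> A n"
    and bounds: "\<forall>m n x. 1 \<le> n \<and> n \<le> m \<longrightarrow>
         N m (evol A m n (P n x)) \<le> K * (real m / real n) powr (-lam) * N n x \<and>
         N n (evol A n m (x - P m x)) \<le> K * (real m / real n) powr (-lam) * N m x \<and>
         N m (evol A m n x) \<le> K * (real m / real n) powr a * N n x \<and>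
         N n (evol A n m x) \<le> K * (real m / real n) powr a * N m x"
    using assms(2) unfolding strong_poly_dich_def by blast
  have sample: "evol (\<lambda>n. evol A (2 ^ (n + 1)) (2 ^ n)) m n = evol A (2 ^ m) (2 ^ n)" for m n
    using evol_sample[of 1 A "power 2" m n] bij by simp
  show ?thesis
    unfolding strong_exp_dich_def sample
  proof (intro exI conjI allI impI)
    show "evol A (2 ^ (n + 1)) (2 ^ n) \<circ> P (2 ^ n) = P (2 ^ Suc n) \<circ> evol A (2 ^ (n + 1)) (2 ^ n)" for n
      using evol_invariant_proj[of 1 A P "2 ^ n" "2 ^ Suc n"] P_inv by (auto simp: fun_eq_iff)
    fix m n :: nat and x assume "n \<le> m"
    then have "1 \<le> (2::nat) ^ n \<and> (2::nat) ^ n \<le> 2 ^ m"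
      by (simp add: power_increasing)
    note dyadic_bounds = bounds[rule_format, OF this, of x, unfolded pow2_ratio_powr mult_minus_left]
    show "N (2 ^ m) (evol A (2 ^ m) (2 ^ n) (P (2 ^ n) x))
        \<le> K * exp (- (lam * ln 2) * (real m - real n)) * N (2 ^ n) x"
      using dyadic_bounds by simp
    show "N (2 ^ n) (evol A (2 ^ n) (2 ^ m) (x - P (2 ^ m) x))
        \<le> K * exp (- (lam * ln 2) * (real m - real n)) * N (2 ^ m) x"
      using dyadic_bounds by simp
    show "N (2 ^ m) (evol A (2 ^ m) (2 ^ n) x) \<le> K * exp (a * ln 2 * (real m - real n)) * N (2 ^ n) x"
      using dyadic_bounds by simp
    show "N (2 ^ n) (evol A (2 ^ n) (2 ^ m) x) \<le> K * exp (a * ln 2 * (real m - real n)) * N (2 ^ m) x"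
      using dyadic_bounds by simp
  qed (use K a lam proj in auto)
qed

locale poly_bounded_evolution =
  fixes A :: "nat \<Rightarrow> 'a::real_vector \<Rightarrow> 'a" and N :: "nat \<Rightarrow> 'a \<Rightarrow> real" and K a :: real
  assumes norm_N: "\<And>n. n \<ge> 1 \<Longrightarrow> is_norm (N n)"
    and linear_A: "\<And>n. n \<ge> 1 \<Longrightarrow> linear (A n)"
    and bij_A: "\<And>n. n \<ge> 1 \<Longrightarrow> bij (A n)"
    and K_pos: "K > 0" and a_pos: "a > 0"
    and growth_fwd: "\<And>m n x. 1 \<le> n \<Longrightarrow> n \<le> m \<Longrightarrow>
       N m (evol A m n x) \<le> K * (real m / real n) powr a * N n x"
    and growth_bwd: "\<And>m n x. 1 \<le> n \<Longrightarrow> n \<le> m \<Longrightarrow>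
       N n (evol A n m x) \<le> K * (real m / real n) powr a * N m x"
begin

lemma N_nonneg: "1 \<le> n \<Longrightarrow> 0 \<le> N n x"
  using norm_N unfolding is_norm_def by blast

lemma evol_cocycle_A: "1 \<le> m \<Longrightarrow> 1 \<le> l \<Longrightarrow> 1 \<le> n \<Longrightarrow> evol A m l (evol A l n x) = evol A m n x"
  using evol_cocycle[of 1 A] bij_A by blast

lemma growth_floor_log:
  assumes "1 \<le> k"
  shows "N k (evol A k (2 ^ floor_log k) y) \<le> K * 2 powr a * N (2 ^ floor_log k) y"
    and "N (2 ^ floor_log k) (evol A (2 ^ floor_log k) k y) \<le> K * 2 powr a * N k y"
proof -
  let ?j = "floor_log k"
  have le: "2 ^ ?j \<le> k"
    using assms floor_log_exp2_le[of k] by simp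
  have "real k \<le> real (2 * 2 ^ ?j)"
    using floor_log_exp2_ge[of k] by (simp only: of_nat_le_iff)
  then have "real k \<le> 2 * 2 ^ ?j"
    by simp
  then have "(real k / 2 ^ ?j) powr a \<le> 2 powr a"
    using a_pos by (intro powr_mono2) (auto simp: field_simps)
  then have bound: "K * (real k / real (2 ^ ?j)) powr a * z \<le> K * 2 powr a * z" if "0 \<le> z" for z
    using that K_pos by (intro mult_right_mono mult_left_mono) auto
  show "N k (evol A k (2 ^ ?j) y) \<le> K * 2 powr a * N (2 ^ ?j) y"
    using growth_fwd[of "2 ^ ?j" k y] bound[of "N (2 ^ ?j) y"] le N_nonneg[of "2 ^ ?j" y] by simp
  show "N (2 ^ ?j) (evol A (2 ^ ?j) k y) \<le> K * 2 powr a * N k y"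
    using growth_bwd[of "2 ^ ?j" k y] bound[of "N k y"] le N_nonneg[of k y] assms by simp
qed

lemma stable_poly_of_dyadic:
  assumes P_inv: "\<And>k. 1 \<le> k \<Longrightarrow> A k \<circ> P k = P (Suc k) \<circ> A k"
    and dyadic: "\<And>i j x. i \<le> j \<Longrightarrow>
       N (2 ^ j) (evol A (2 ^ j) (2 ^ i) (P (2 ^ i) x)) \<le> K' * exp (-\<mu> * (real j - real i)) * N (2 ^ i) x"
    and "0 < K'" "0 < \<mu>" "1 \<le> n" "n \<le> m"
  shows "N m (evol A m n (P n x))
    \<le> (K * 2 powr a)\<^sup>2 * K' * 2 powr (\<mu> / ln 2) * (real m / real n) powr (-(\<mu> / ln 2)) * N n x"
proof -
  define i j where "i = floor_log n" and "j = floor_log m"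
  define y where "y = evol A (2 ^ i) n x"
  define w where "w = evol A (2 ^ j) (2 ^ i) (P (2 ^ i) y)"
  let ?c = "K * 2 powr a" and ?d = "K' * (2 powr (\<mu> / ln 2) * (real m / real n) powr (-(\<mu> / ln 2)))"
  have "i \<le> j"
    using \<open>n \<le> m\<close> by (simp add: i_def j_def floor_log_le_iff)
  have c_nonneg: "0 \<le> ?c"
    using K_pos by simp
  have "N (2 ^ j) w \<le> K' * exp (-\<mu> * (real j - real i)) * N (2 ^ i) y"
    unfolding w_def by (rule dyadic[OF \<open>i \<le> j\<close>])
  also have "\<dots> \<le> ?d * N (2 ^ i) y"
    using exp_floor_log_diff_le_powr[OF \<open>0 < \<mu>\<close> \<open>1 \<le> n\<close> \<open>n \<le> m\<close>]
      N_nonneg[of "2 ^ i" y] \<open>0 < K'\<close>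
    by (intro mult_right_mono mult_left_mono) (simp_all add: i_def j_def)
  finally have dyadic_step: "N (2 ^ j) w \<le> ?d * N (2 ^ i) y" .
  have "N m (evol A m n (P n x)) = N m (evol A m (2 ^ j) w)"
    using invariant_proj_conj[of 1 A P n "2 ^ i" x] bij_A P_inv \<open>1 \<le> n\<close> \<open>n \<le> m\<close>
    by (simp add: w_def y_def evol_cocycle_A)
  also have "\<dots> \<le> ?c * N (2 ^ j) w"
    using growth_floor_log(1)[of m w] \<open>1 \<le> n\<close> \<open>n \<le> m\<close> by (simp add: j_def)
  also have "\<dots> \<le> ?c * (?d * N (2 ^ i) y)"
    using dyadic_step c_nonneg by (rule mult_left_mono)
  also have "\<dots> \<le> ?c * (?d * (?c * N n x))"
    using growth_floor_log(2)[of n x] \<open>1 \<le> n\<close> c_nonneg \<open>0 < K'\<close>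
    by (intro mult_left_mono) (simp_all add: y_def i_def)
  finally show ?thesis
    by (simp add: power2_eq_square mult_ac)
qed

lemma unstable_poly_of_dyadic:
  assumes P_inv: "\<And>k. 1 \<le> k \<Longrightarrow> A k \<circ> P k = P (Suc k) \<circ> A k"
    and dyadic: "\<And>i j x. i \<le> j \<Longrightarrow>
       N (2 ^ i) (evol A (2 ^ i) (2 ^ j) (x - P (2 ^ j) x)) \<le> K' * exp (-\<mu> * (real j - real i)) * N (2 ^ j) x"
    and "0 < K'" "0 < \<mu>" "1 \<le> n" "n \<le> m"
  shows "N n (evol A n m (x - P m x))
    \<le> (K * 2 powr a)\<^sup>2 * K' * 2 powr (\<mu> / ln 2) * (real m / real n) powr (-(\<mu> / ln 2)) * N m x"
proof -
  define i j where "i = floor_log n" and "j = floor_log m"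
  define y where "y = evol A (2 ^ j) m x"
  define w where "w = evol A (2 ^ i) (2 ^ j) (y - P (2 ^ j) y)"
  let ?c = "K * 2 powr a" and ?d = "K' * (2 powr (\<mu> / ln 2) * (real m / real n) powr (-(\<mu> / ln 2)))"
  have "1 \<le> m"
    using \<open>1 \<le> n\<close> \<open>n \<le> m\<close> by simp
  have "i \<le> j"
    using \<open>n \<le> m\<close> by (simp add: i_def j_def floor_log_le_iff)
  have c_nonneg: "0 \<le> ?c"
    using K_pos by simp
  have "N (2 ^ i) w \<le> K' * exp (-\<mu> * (real j - real i)) * N (2 ^ j) y"
    unfolding w_def by (rule dyadic[OF \<open>i \<le> j\<close>])
  also have "\<dots> \<le> ?d * N (2 ^ j) y"
    using exp_floor_log_diff_le_powr[OF \<open>0 < \<mu>\<close> \<open>1 \<le> n\<close> \<open>n \<le> m\<close>]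
      N_nonneg[of "2 ^ j" y] \<open>0 < K'\<close>
    by (intro mult_right_mono mult_left_mono) (simp_all add: i_def j_def)
  finally have dyadic_step: "N (2 ^ i) w \<le> ?d * N (2 ^ j) y" .
  have "x = evol A m (2 ^ j) y" and "P m x = evol A m (2 ^ j) (P (2 ^ j) y)"
    using invariant_proj_conj[of 1 A P m "2 ^ j" x] bij_A P_inv \<open>1 \<le> m\<close>
      evol_cocycle_A[of m "2 ^ j" m x] by (simp_all add: y_def)
  then have "x - P m x = evol A m (2 ^ j) (y - P (2 ^ j) y)"
    using linear_diff[OF evol_linear[of 1 A m "2 ^ j"]] bij_A linear_A \<open>1 \<le> m\<close> by simp
  then have "N n (evol A n m (x - P m x)) = N n (evol A n (2 ^ i) w)"
    using \<open>1 \<le> n\<close> \<open>1 \<le> m\<close> by (simp add: w_def evol_cocycle_A)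
  also have "\<dots> \<le> ?c * N (2 ^ i) w"
    using growth_floor_log(1)[of n w] \<open>1 \<le> n\<close> by (simp add: i_def)
  also have "\<dots> \<le> ?c * (?d * N (2 ^ j) y)"
    using dyadic_step c_nonneg by (rule mult_left_mono)
  also have "\<dots> \<le> ?c * (?d * (?c * N m x))"
    using growth_floor_log(2)[of m x] \<open>1 \<le> m\<close> c_nonneg \<open>0 < K'\<close>
    by (intro mult_left_mono) (simp_all add: y_def j_def)
  finally show ?thesis
    by (simp add: power2_eq_square mult_ac)
qed

lemma strong_poly_dich_of_sample:
  assumes "strong_exp_dich (\<lambda>n. evol A (2 ^ (n + 1)) (2 ^ n)) (\<lambda>n. N (2 ^ n))"
  shows "strong_poly_dich A N"
proof -
  let ?B = "\<lambda>n. evol A (2 ^ (n + 1)) (2 ^ n)"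
  obtain K' a' \<mu> Q where K': "0 < K'" and \<mu>: "0 < \<mu>"
    and Q_proj: "\<forall>n. is_projection (Q n)"
    and Q_inv: "\<forall>n. ?B n \<circ> Q n = Q (Suc n) \<circ> ?B n"
    and bounds: "\<forall>m n x. n \<le> m \<longrightarrow>
         N (2 ^ m) (evol ?B m n (Q n x)) \<le> K' * exp (-\<mu> * (real m - real n)) * N (2 ^ n) x \<and>
         N (2 ^ n) (evol ?B n m (x - Q m x)) \<le> K' * exp (-\<mu> * (real m - real n)) * N (2 ^ m) x \<and>
         N (2 ^ m) (evol ?B m n x) \<le> K' * exp (a' * (real m - real n)) * N (2 ^ n) x \<and>
         N (2 ^ n) (evol ?B n m x) \<le> K' * exp (a' * (real m - real n)) * N (2 ^ m) x"
    using assms unfolding strong_exp_dich_def by blast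
  have sample: "evol ?B m n = evol A (2 ^ m) (2 ^ n)" for m n
    using evol_sample[of 1 A "power 2" m n] bij_A by simp
  define P where "P = transport_proj A 1 (Q 0)"
  have P_inv: "A k \<circ> P k = P (Suc k) \<circ> A k" if "1 \<le> k" for k
    unfolding P_def using transport_proj_invariant[of 1 A k] bij_A that by blast
  have P_dyadic: "P (2 ^ j) = Q j" for j
    using transport_proj_sample[of 1 A "power 2" Q j] bij_A Q_inv by (simp add: P_def)
  note dyadic_bounds = bounds[rule_format, unfolded sample P_dyadic[symmetric]]
  have stable_dyadic: "N (2 ^ j) (evol A (2 ^ j) (2 ^ i) (P (2 ^ i) x))
      \<le> K' * exp (-\<mu> * (real j - real i)) * N (2 ^ i) x" if "i \<le> j" for i j x
    using dyadic_bounds[OF that] by blast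
  have unstable_dyadic: "N (2 ^ i) (evol A (2 ^ i) (2 ^ j) (x - P (2 ^ j) x))
      \<le> K' * exp (-\<mu> * (real j - real i)) * N (2 ^ j) x" if "i \<le> j" for i j x
    using dyadic_bounds[OF that] by blast
  show ?thesis
  proof (rule strong_poly_dichI[OF _ P_inv _ K_pos _ N_nonneg _ _ growth_fwd growth_bwd])
    show "is_projection (P n)" if "1 \<le> n" for n
      unfolding P_def using is_projection_transport_proj[of 1 A] bij_A linear_A Q_proj that by blast
    show "N m (evol A m n (P n x))
      \<le> (K * 2 powr a)\<^sup>2 * K' * 2 powr (\<mu> / ln 2) * (real m / real n) powr (-(\<mu> / ln 2)) * N n x"
      if "1 \<le> n" "n \<le> m" for m n x
      by (rule stable_poly_of_dyadic[OF P_inv stable_dyadic K' \<mu> that])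
    show "N n (evol A n m (x - P m x))
      \<le> (K * 2 powr a)\<^sup>2 * K' * 2 powr (\<mu> / ln 2) * (real m / real n) powr (-(\<mu> / ln 2)) * N m x"
      if "1 \<le> n" "n \<le> m" for m n x
      by (rule unstable_poly_of_dyadic[OF P_inv unstable_dyadic K' \<mu> that])
  qed (use K' \<mu> in auto)
qed

lemma strong_poly_dich_iff_sample:
  "strong_poly_dich A N \<longleftrightarrow> strong_exp_dich (\<lambda>n. evol A (2 ^ (n + 1)) (2 ^ n)) (\<lambda>n. N (2 ^ n))"
  using strong_exp_dich_sample[of A N] strong_poly_dich_of_sample bij_A by blast

end

theorem proposition2p3:
  fixes A :: "nat \<Rightarrow> real ^ 'd \<Rightarrow> real ^ 'd"
    and N :: "nat \<Rightarrow> real ^ 'd \<Rightarrow> real"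
    and K a :: real
  assumes norms: "\<And>n. n \<ge> 1 \<Longrightarrow> is_norm (N n)"
    and lin: "\<And>n. n \<ge> 1 \<Longrightarrow> linear (A n)"
    and inv: "\<And>n. n \<ge> 1 \<Longrightarrow> bij (A n)"
    and K: "K > 0" and a: "a > 0"
    and growth_fwd: "\<And>m n x. 1 \<le> n \<Longrightarrow> n \<le> m \<Longrightarrow>
       N m (evol A m n x) \<le> K * (real m / real n) powr a * N n x"
    and growth_bwd: "\<And>m n x. 1 \<le> n \<Longrightarrow> n \<le> m \<Longrightarrow>
       N n (evol A n m x) \<le> K * (real m / real n) powr a * N m x"
  shows "strong_poly_dich A N \<longleftrightarrow>
         strong_exp_dich (\<lambda>n. evol A (2 ^ (n + 1)) (2 ^ n)) (\<lambda>n. N (2 ^ n))"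
proof -
  interpret poly_bounded_evolution A N K a
    by (rule poly_bounded_evolution.intro[OF norms lin inv K a growth_fwd growth_bwd])
  show ?thesis
    by (rule strong_poly_dich_iff_sample)
qed

end
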